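(* Let $\mathcal{Q}$ be a recourse function with a disaggregation $\{\mathcal{Q}(R,v)\}$ such that there are vectors $w\in\mathbb{Q}^{V_+}_{\ge0}$ and $b\in\mathbb{Z}^{V_+}_{\ge0}$ with the property that for every route $R$ there exists $\bar y_R\in\Pi(R)\cap[\mathbf 0,b]^N$ satisfying $\mathcal{Q}(R,v)\ge\sum_{\xi\in[N]}p_\xi w_v(\bar y_R)^\xi_v$ for all $v\in V_+(R)$. Define $$\mathcal{F}(\mathcal{X},\mathcal{Q})=\Big\{(x,\theta)\in(\mathcal{X}\cap\mathbb{Z}^E)\times\mathbb{R}^{V_+}_{\ge0}:\ \theta_v\ge\sum_{R\in\mathcal{R}(x)}\mathcal{Q}(R,v)\ \forall v\in V_+\Big\}$$ and let $\mathcal{M}$ be the set of triples $(x,\theta,y)$ with $x\in\mathcal{X}\cap\mathbb{Z}^E$, $y\in\Pi(x)\cap[\mathbf 0,b]^N$ and $\theta_v\ge\sum_{\xi\in[N]}p_\xi w_v y^\xi_v$ for all $v\in V_+$. Then $\mathcal{F}(\mathcal{X},\mathcal{Q})\subseteq\{(x,\theta):\exists y \text{ with }(x,\theta,y)\in\mathcal{M}\}$.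
   Context: $G=(V,E)$ is a complete undirected graph with $V=\{0\}\cup V_+$ ($0$ the depot, $V_+$ the customers); $D=(V,A)$ replaces each edge by two opposite arcs. $C\in\mathbb{Q}_{>0}$ is the capacity. Scenarios $\xi\in[N]$ have demand vectors $d^\xi\in\mathbb{Q}^{V_+}_{\ge0}$ and probabilities $p_\xi\ge0$, $\sum_\xi p_\xi=1$; assume $d^\xi(v)\le C$ for all $\xi,v$. $f(S)=\sum_{i\in S}f(i)$; $\bar d=\sum_\xi p_\xi d^\xi$. $\delta(S)$: edges with exactly one endpoint in $S$; $E(S)$: edges with both endpoints in $S$. $\mathcal{X}$ is one of $\mathcal{X}_{\mathrm{sub}}=\{x\in[0,2]^E: x(\delta(v))=2\ \forall v\in V_+,\ x(E(S))\le|S|-1\ \forall\emptyset\ne S\subseteq V_+\}$ or $\mathcal{X}_{\mathrm{cvrp}}=\mathcal{X}_{\mathrm{sub}}\cap\{x: x(\delta(0))=2k,\ x(E(S))\le |S|-\lceil\bar d(S)/C\rceil\ \forall\emptyset\ne S\subseteq V_+\}$ for a given positive integer $k$. A route $R=(v_1,\dots,v_\ell)$ is the cycle $0,v_1,\dots,v_\ell,0$ through distinct customers, $V_+(R)=\{v_1,\dots,v_\ell\}$, $v_0=v_{\ell+1}=0$. Each $x\in\mathcal{X}\cap\mathbb{Z}^E$ encodes a collection of routes $\mathcal{R}(x)$ whose customer sets partition $V_+$. A recourse function $\mathcal{Q}$ maps each route to a nonnegative rational; a disaggregation consists of values $\mathcal{Q}(R,v)$, $v\in V_+$, with $\mathcal{Q}(R)=\sum_{v\in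 V_+(R)}\mathcal{Q}(R,v)$ and $\mathcal{Q}(R,v)=0$ for $v\notin V_+(R)$. Vectors $y\in\mathbb{R}^{[N]\times V_+}$ have entries $y^\xi_v$. For a route $R=(v_1,\dots,v_\ell)$ and $\xi$, $\mathcal{Y}^\xi(R)$ is the set of $y^\xi\in\mathbb{Z}^{V_+}_{\ge0}$ for which there exist $f\in\mathbb{R}^A_{\ge0}$, $g\in\mathbb{R}^{V_+}_{\ge0}$ with $f_{(v_{i-1},v_i)}+d^\xi(v_i)=f_{(v_i,v_{i+1})}+g_{v_i}$ ($i\in[\ell]$), $f_{(v_{i-1},v_i)}\le C$ ($i\in[\ell+1]$), $g_{v_i}\le Cy^\xi_{v_i}$ ($i\in[\ell]$). $\Pi(R)=\mathcal{Y}^1(R)\times\cdots\times\mathcal{Y}^N(R)$; $\Pi(x)=\bigcap_{R\in\mathcal{R}(x)}\Pi(R)$. $[\mathbf 0,b]^N=\{y:0\le y^\xi_v\le b_v\ \forall\xi,v\}$. *)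

theory Defs
  imports Main "HOL.Real"
begin

(* Vertices are naturals; depot = 0, customers V+ = {1..n}, V = {0..n}.
   Scenarios are indexed by {1..N}.  A route is a list of distinct customers. *)

definition edges :: "nat \<Rightarrow> nat set set" where
  "edges n = {e. \<exists>u v. e = {u, v} \<and> u \<le> n \<and> v \<le> n \<and> u \<noteq> v}"

definition delta :: "nat \<Rightarrow> nat set \<Rightarrow> nat set set" where
  "delta n S = {e \<in> edges n. card (e \<inter> S) = 1}"

definition Ein :: "nat \<Rightarrow> nat set \<Rightarrow> nat set set" where
  "Ein n S = {e \<in> edges n. e \<subseteq> S}"

definition Xsub :: "nat \<Rightarrow> (nat set \<Rightarrow> real) set" where
  "Xsub n = {x. (\<forall>e. e \<notin> edges n \<longrightarrow> x e = 0)
     \<and> (\<forall>e\<in>edges n. 0 \<le> x e \<and> x e \<le> 2)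
     \<and> (\<forall>v\<in>{1..n}. sum x (delta n {v}) = 2)
     \<and> (\<forall>S. S \<noteq> {} \<and> S \<subseteq> {1..n} \<longrightarrow> sum x (Ein n S) \<le> real (card S) - 1)}"

definition dbar :: "nat \<Rightarrow> (nat \<Rightarrow> real) \<Rightarrow> (nat \<Rightarrow> nat \<Rightarrow> real) \<Rightarrow> nat \<Rightarrow> real" where
  "dbar N p d v = (\<Sum>\<xi>\<in>{1..N}. p \<xi> * d \<xi> v)"

definition Xcvrp :: "nat \<Rightarrow> real \<Rightarrow> (nat \<Rightarrow> nat \<Rightarrow> real) \<Rightarrow> (nat \<Rightarrow> real) \<Rightarrow> nat \<Rightarrow> nat
    \<Rightarrow> (nat set \<Rightarrow> real) set" where
  "Xcvrp n C d p N k = Xsub n \<inter> {x. sum x (delta n {0}) = 2 * real k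
     \<and> (\<forall>S. S \<noteq> {} \<and> S \<subseteq> {1..n} \<longrightarrow>
          sum x (Ein n S) \<le> real (card S) - of_int \<lceil>(\<Sum>v\<in>S. dbar N p d v) / C\<rceil>)}"

definition Xint :: "nat \<Rightarrow> (nat set \<Rightarrow> real) set \<Rightarrow> (nat set \<Rightarrow> real) set" where
  "Xint n X = {x \<in> X. \<forall>e\<in>edges n. x e \<in> \<int>}"

definition is_route :: "nat \<Rightarrow> nat list \<Rightarrow> bool" where
  "is_route n R \<longleftrightarrow> R \<noteq> [] \<and> distinct R \<and> set R \<subseteq> {1..n}"

(* v_i of route R = (v_1,...,v_l), with v_0 = v_{l+1} = 0 *)
definition rv :: "nat list \<Rightarrow> nat \<Rightarrow> nat" where
  "rv R i = (if 1 \<le> i \<and> i \<le> length R then R ! (i - 1) else 0)"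

(* multiplicity of edge e in the cycle 0,v_1,...,v_l,0 *)
definition chi :: "nat list \<Rightarrow> nat set \<Rightarrow> real" where
  "chi R e = real (card {i \<in> {0..length R}. {rv R i, rv R (i + 1)} = e})"

definition encodes :: "nat \<Rightarrow> (nat set \<Rightarrow> real) \<Rightarrow> nat list set \<Rightarrow> bool" where
  "encodes n x Rs \<longleftrightarrow> finite Rs \<and> (\<forall>R\<in>Rs. is_route n R)
     \<and> (\<forall>R\<in>Rs. \<forall>R'\<in>Rs. R \<noteq> R' \<longrightarrow> set R \<inter> set R' = {})
     \<and> (\<Union>R\<in>Rs. set R) = {1..n}
     \<and> (\<forall>e\<in>edges n. x e = (\<Sum>R\<in>Rs. chi R e))"

definition Yxi :: "nat \<Rightarrow> real \<Rightarrow> (nat \<Rightarrow> real) \<Rightarrow> nat list \<Rightarrow> (nat \<Rightarrow> int) set" where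
  "Yxi n C dxi R = {y. (\<forall>v\<in>{1..n}. 0 \<le> y v) \<and>
     (\<exists>(f :: nat \<times> nat \<Rightarrow> real) (g :: nat \<Rightarrow> real).
        (\<forall>a. 0 \<le> f a) \<and> (\<forall>v. 0 \<le> g v)
      \<and> (\<forall>i\<in>{1..length R}. f (rv R (i - 1), rv R i) + dxi (rv R i)
                              = f (rv R i, rv R (i + 1)) + g (rv R i))
      \<and> (\<forall>i\<in>{1..length R + 1}. f (rv R (i - 1), rv R i) \<le> C)
      \<and> (\<forall>i\<in>{1..length R}. g (rv R i) \<le> C * of_int (y (rv R i))))}"

(* Pi(R) = Y^1(R) x ... x Y^N(R); y xi v = y^xi_v *)
definition PiR :: "nat \<Rightarrow> real \<Rightarrow> (nat \<Rightarrow> nat \<Rightarrow> real) \<Rightarrow> nat \<Rightarrow> nat list \<Rightarrow> (nat \<Rightarrow> nat \<Rightarrow> int) set" where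
  "PiR n C d N R = {y. \<forall>\<xi>\<in>{1..N}. y \<xi> \<in> Yxi n C (d \<xi>) R}"

definition Pix :: "nat \<Rightarrow> real \<Rightarrow> (nat \<Rightarrow> nat \<Rightarrow> real) \<Rightarrow> nat \<Rightarrow> nat list set \<Rightarrow> (nat \<Rightarrow> nat \<Rightarrow> int) set" where
  "Pix n C d N Rs = (\<Inter>R\<in>Rs. PiR n C d N R)"

definition boxN :: "nat \<Rightarrow> nat \<Rightarrow> (nat \<Rightarrow> int) \<Rightarrow> (nat \<Rightarrow> nat \<Rightarrow> int) set" where
  "boxN n N b = {y. \<forall>\<xi>\<in>{1..N}. \<forall>v\<in>{1..n}. 0 \<le> y \<xi> v \<and> y \<xi> v \<le> b v}"

end

theory Submission
  imports Defs "HOL-Library.Disjoint_Sets"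
begin

text \<open>Membership of \<open>y\<close> in \<open>Y\<^sup>\<xi>(R)\<close> constrains \<open>y\<close> only on the customers of \<open>R\<close>
  (besides nonnegativity). Since the routes of an integer \<open>x\<close> partition the customers, the
  vectors \<open>ybar\<^sub>R\<close> of the single routes can be glued into one \<open>y \<in> \<Pi>(x) \<inter> [0,b]\<^sup>N\<close>,
  and for each customer \<open>v\<close> only the route through \<open>v\<close> contributes to the bound on \<open>\<theta>\<^sub>v\<close>.\<close>

lemma rv_in_set: "i \<in> {1..length R} \<Longrightarrow> rv R i \<in> set R"
  by (auto simp: rv_def)

lemma Yxi_cong:
  assumes "y \<in> Yxi n C dxi R" "\<forall>v\<in>set R. y' v = y v" "\<forall>v\<in>{1..n}. 0 \<le> y' v"
  shows "y' \<in> Yxi n C dxi R"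
proof -
  from assms(1) obtain f g where flow: "(\<forall>a. 0 \<le> f a) \<and> (\<forall>v. 0 \<le> g v)
      \<and> (\<forall>i\<in>{1..length R}. f (rv R (i - 1), rv R i) + dxi (rv R i)
                              = f (rv R i, rv R (i + 1)) + g (rv R i))
      \<and> (\<forall>i\<in>{1..length R + 1}. f (rv R (i - 1), rv R i) \<le> C)"
    and unload: "\<forall>i\<in>{1..length R}. g (rv R i) \<le> C * of_int (y (rv R i))"
    unfolding Yxi_def by blast
  have "\<forall>i\<in>{1..length R}. g (rv R i) \<le> C * of_int (y' (rv R i))"
    using unload assms(2) rv_in_set by metis
  with flow assms(3) show ?thesis
    unfolding Yxi_def by blast
qed

lemma PiR_cong:
  assumes "y \<in> PiR n C d N R" "\<forall>\<xi>\<in>{1..N}. \<forall>v\<in>set R. y' \<xi> v = y \<xi> v"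
    and "\<forall>\<xi>\<in>{1..N}. \<forall>v\<in>{1..n}. 0 \<le> y' \<xi> v"
  shows "y' \<in> PiR n C d N R"
  using assms Yxi_cong unfolding PiR_def by blast

definition route_of :: "'a list set \<Rightarrow> 'a \<Rightarrow> 'a list" where
  "route_of Rs v = (THE R. R \<in> Rs \<and> v \<in> set R)"

lemma route_of_eq:
  assumes "disjoint_family_on set Rs" "R \<in> Rs" "v \<in> set R"
  shows "route_of Rs v = R"
  unfolding route_of_def
  by (rule the_equality) (use assms in \<open>auto dest: disjoint_family_onD\<close>)

definition glue :: "'a list set \<Rightarrow> ('a list \<Rightarrow> 'i \<Rightarrow> 'a \<Rightarrow> 'b) \<Rightarrow> 'i \<Rightarrow> 'a \<Rightarrow> 'b" where
  "glue Rs ys \<xi> v = ys (route_of Rs v) \<xi> v"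

lemma glue_eq:
  "disjoint_family_on set Rs \<Longrightarrow> R \<in> Rs \<Longrightarrow> v \<in> set R \<Longrightarrow> glue Rs ys \<xi> v = ys R \<xi> v"
  by (simp add: glue_def route_of_eq)

lemma glue_in_boxN:
  assumes "disjoint_family_on set Rs" "(\<Union>R\<in>Rs. set R) = {1..n}"
    and "\<forall>R\<in>Rs. ys R \<in> boxN n N b"
  shows "glue Rs ys \<in> boxN n N b"
  unfolding boxN_def
proof (intro CollectI ballI)
  fix \<xi> v assume "\<xi> \<in> {1..N}" "v \<in> {1..n}"
  moreover from \<open>v \<in> {1..n}\<close> assms(2) obtain R where R: "R \<in> Rs" "v \<in> set R" by blast
  ultimately show "0 \<le> glue Rs ys \<xi> v \<and> glue Rs ys \<xi> v \<le> b v"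
    using assms(3) unfolding boxN_def by (auto simp: glue_eq[OF assms(1) R])
qed

lemma glue_in_Pix:
  assumes "disjoint_family_on set Rs" "\<forall>\<xi>\<in>{1..N}. \<forall>v\<in>{1..n}. 0 \<le> glue Rs ys \<xi> v"
    and "\<forall>R\<in>Rs. ys R \<in> PiR n C d N R"
  shows "glue Rs ys \<in> Pix n C d N Rs"
  unfolding Pix_def
proof (rule InterI, clarify)
  fix R assume "R \<in> Rs"
  show "glue Rs ys \<in> PiR n C d N R"
  proof (rule PiR_cong[of "ys R"])
    show "ys R \<in> PiR n C d N R" using assms(3) \<open>R \<in> Rs\<close> by blast
    show "\<forall>\<xi>\<in>{1..N}. \<forall>v\<in>set R. glue Rs ys \<xi> v = ys R \<xi> v"
      by (simp add: glue_eq[OF assms(1) \<open>R \<in> Rs\<close>])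
  qed (use assms(2) in blast)
qed

lemma sum_disjoint_supports:
  fixes h :: "'a list \<Rightarrow> 'a \<Rightarrow> 'b::comm_monoid_add"
  assumes "finite Rs" "disjoint_family_on set Rs" "R \<in> Rs" "v \<in> set R"
    and "\<forall>R'\<in>Rs. v \<notin> set R' \<longrightarrow> h R' v = 0"
  shows "(\<Sum>R'\<in>Rs. h R' v) = h R v"
proof -
  have "\<forall>R'\<in>Rs - {R}. h R' v = 0"
    using assms(2-5) by (blast dest: disjoint_family_onD)
  then show ?thesis
    using sum.mono_neutral_left[of Rs "{R}" "\<lambda>R'. h R' v"] assms(1,3) by simp
qed

theorem proposition1:
  fixes n N :: nat and C :: real
    and d :: "nat \<Rightarrow> nat \<Rightarrow> real" and p :: "nat \<Rightarrow> real"
    and X :: "(nat set \<Rightarrow> real) set"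
    and Rof :: "(nat set \<Rightarrow> real) \<Rightarrow> nat list set"
    and Q :: "nat list \<Rightarrow> real" and Qd :: "nat list \<Rightarrow> nat \<Rightarrow> real"
    and w :: "nat \<Rightarrow> real" and b :: "nat \<Rightarrow> int"
  assumes C: "C \<in> \<rat>" "C > 0"
    and d: "\<forall>\<xi>\<in>{1..N}. \<forall>v\<in>{1..n}. d \<xi> v \<in> \<rat> \<and> 0 \<le> d \<xi> v \<and> d \<xi> v \<le> C"
    and p: "\<forall>\<xi>\<in>{1..N}. p \<xi> \<in> \<rat> \<and> 0 \<le> p \<xi>" "(\<Sum>\<xi>\<in>{1..N}. p \<xi>) = 1"
    and X: "X = Xsub n \<or> (\<exists>k::nat. k > 0 \<and> X = Xcvrp n C d p N k)"
    and Rof: "\<forall>x\<in>Xint n X. encodes n x (Rof x)"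
    and Q: "\<forall>R. is_route n R \<longrightarrow> Q R \<in> \<rat> \<and> 0 \<le> Q R"
    and Qd: "\<forall>R. is_route n R \<longrightarrow> Q R = (\<Sum>v\<in>set R. Qd R v)
                 \<and> (\<forall>v. Qd R v \<in> \<rat>) \<and> (\<forall>v. v \<notin> set R \<longrightarrow> Qd R v = 0)"
    and w: "\<forall>v\<in>{1..n}. w v \<in> \<rat> \<and> 0 \<le> w v"
    and b: "\<forall>v\<in>{1..n}. 0 \<le> b v"
    and ybar: "\<forall>R. is_route n R \<longrightarrow> (\<exists>ybar \<in> PiR n C d N R \<inter> boxN n N b.
                 \<forall>v\<in>set R. Qd R v \<ge> (\<Sum>\<xi>\<in>{1..N}. p \<xi> * w v * of_int (ybar \<xi> v)))"
  shows "\<forall>x \<theta>. (x \<in> Xint n X \<and> (\<forall>v\<in>{1..n}. 0 \<le> \<theta> v)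
              \<and> (\<forall>v\<in>{1..n}. \<theta> v \<ge> (\<Sum>R\<in>Rof x. Qd R v)))
          \<longrightarrow> (\<exists>y. y \<in> Pix n C d N (Rof x) \<inter> boxN n N b
                  \<and> (\<forall>v\<in>{1..n}. \<theta> v \<ge> (\<Sum>\<xi>\<in>{1..N}. p \<xi> * w v * of_int (y \<xi> v))))"
proof (intro allI impI)
  fix x \<theta>
  assume x: "x \<in> Xint n X \<and> (\<forall>v\<in>{1..n}. 0 \<le> \<theta> v)
              \<and> (\<forall>v\<in>{1..n}. \<theta> v \<ge> (\<Sum>R\<in>Rof x. Qd R v))"
  let ?Rs = "Rof x"
  have "encodes n x ?Rs" using x Rof by blast
  then have fin: "finite ?Rs" and routes: "\<forall>R\<in>?Rs. is_route n R"
    and disj: "disjoint_family_on set ?Rs" and cover: "(\<Union>R\<in>?Rs. set R) = {1..n}"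
    unfolding encodes_def disjoint_family_on_def by auto
  have choice: "\<forall>R\<in>?Rs. \<exists>yb. yb \<in> PiR n C d N R \<inter> boxN n N b \<and>
      (\<forall>v\<in>set R. Qd R v \<ge> (\<Sum>\<xi>\<in>{1..N}. p \<xi> * w v * of_int (yb \<xi> v)))"
    using routes ybar by blast
  obtain ys where ys: "\<forall>R\<in>?Rs. ys R \<in> PiR n C d N R \<inter> boxN n N b \<and>
      (\<forall>v\<in>set R. Qd R v \<ge> (\<Sum>\<xi>\<in>{1..N}. p \<xi> * w v * of_int (ys R \<xi> v)))"
    using bchoice[OF choice] by blast
  let ?y = "glue ?Rs ys"
  have box: "?y \<in> boxN n N b"
    using glue_in_boxN[OF disj cover] ys by blast
  then have "\<forall>\<xi>\<in>{1..N}. \<forall>v\<in>{1..n}. 0 \<le> ?y \<xi> v"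
    unfolding boxN_def by blast
  then have "?y \<in> Pix n C d N ?Rs"
    using glue_in_Pix[OF disj] ys by blast
  moreover have "\<theta> v \<ge> (\<Sum>\<xi>\<in>{1..N}. p \<xi> * w v * of_int (?y \<xi> v))"
    if "v \<in> {1..n}" for v
  proof -
    from that cover obtain R where R: "R \<in> ?Rs" "v \<in> set R" by blast
    have "(\<Sum>\<xi>\<in>{1..N}. p \<xi> * w v * of_int (?y \<xi> v))
        = (\<Sum>\<xi>\<in>{1..N}. p \<xi> * w v * of_int (ys R \<xi> v))"
      by (simp add: glue_eq[OF disj R])
    also have "\<dots> \<le> Qd R v"
      using ys R by blast
    also have "\<dots> = (\<Sum>R'\<in>?Rs. Qd R' v)"
      using routes Qd by (intro sum_disjoint_supports[OF fin disj R, symmetric]) blast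
    also have "\<dots> \<le> \<theta> v"
      using x that by blast
    finally show ?thesis .
  qed
  ultimately show "\<exists>y. y \<in> Pix n C d N ?Rs \<inter> boxN n N b
      \<and> (\<forall>v\<in>{1..n}. \<theta> v \<ge> (\<Sum>\<xi>\<in>{1..N}. p \<xi> * w v * of_int (y \<xi> v)))"
    using box by blast
qed

end
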